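(* Let $\mathcal{F}=\mathcal{B}(K_3)$. Then for $n\ge 3$, $$2^{n-2}(1-o(1))\le f(n,\mathcal{F})\le 2^{n-2},$$ where $o(1)\to 0$ as $n\to\infty$.
   Context: For a graph $G$, a hypergraph $H$ is a Berge-$G$ hypergraph if there are an injective map $\phi:V(G)\to V(H)$ and pairwise distinct hyperedges $e_{xy}\in E(H)$, one for each $xy\in E(G)$, with $\phi(x),\phi(y)\in e_{xy}$. $\mathcal{B}(G)$ denotes the family of all Berge-$G$ hypergraphs. For a positive integer $n$ and a graph $G$, $f(n,\mathcal{B}(G))$ is the smallest number of colors in a coloring of all subsets of $[n]=\{1,\dots,n\}$ (i.e. of $2^{[n]}$) such that there is no monochromatic Berge-$G$ hypergraph, i.e. no color class, viewed as a (non-uniform) hypergraph on $[n]$, contains a Berge-$G$ subhypergraph. *)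

theory Defs
  imports Complex_Main
begin

text \<open>A graph G is given by a vertex set VG and a set EG of 2-element subsets of VG.\<close>

definition contains_berge ::
  "'v set \<Rightarrow> 'v set set \<Rightarrow> 'a set \<Rightarrow> 'a set set \<Rightarrow> bool" where
  "contains_berge VG EG V H \<longleftrightarrow>
     (\<exists>phi e. inj_on phi VG \<and> phi ` VG \<subseteq> V \<and> inj_on e EG \<and> e ` EG \<subseteq> H \<and>
        (\<forall>xy\<in>EG. phi ` xy \<subseteq> e xy))"

definition K3_V :: "nat set" where "K3_V = {0,1,2}"
definition K3_E :: "nat set set" where "K3_E = {{0,1},{1,2},{0,2}}"

definition no_mono_berge ::
  "'v set \<Rightarrow> 'v set set \<Rightarrow> nat \<Rightarrow> (nat set \<Rightarrow> nat) \<Rightarrow> bool" where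
  "no_mono_berge VG EG n c \<longleftrightarrow>
     (\<forall>i. \<not> contains_berge VG EG {1..n} {A. A \<subseteq> {1..n} \<and> c A = i})"

definition f_berge :: "'v set \<Rightarrow> 'v set set \<Rightarrow> nat \<Rightarrow> nat" where
  "f_berge VG EG n =
     (LEAST k. \<exists>c. (\<forall>A. A \<subseteq> {1..n} \<longrightarrow> c A < k) \<and> no_mono_berge VG EG n c)"

end

theory Submission
  imports Defs
begin

text \<open>
  Upper bound: colour a set \<open>A \<subseteq> [n]\<close> by whichever of \<open>A\<close> and \<open>[n] - A\<close> avoids \<open>1\<close>,
  with the element \<open>2\<close> deleted; this uses \<open>2^(n-2)\<close> colours. Among three distinct sets of one
  colour, two agree on whether the representative contains \<open>2\<close>, so they are equal or
  complementary, hence disjoint; but a Berge triangle consists of three pairwise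
  intersecting edges.

  Lower bound: two subsets of size at least \<open>(n+3)/2\<close> share at least three points, so any
  three of them carry a Berge triangle and each colour class contains at most two of them.
  Complementation maps the small sets injectively to the large ones, and only three middle
  layers remain, so there are at least \<open>(2^n - 3 binom(n, n div 2))/2\<close> large sets, while
  \<open>binom(n, n div 2) \<le> 2^n / sqrt(n+1)\<close>.
\<close>

lemma K3_edges_distinct: "{0::nat, 1} \<noteq> {1, 2}" "{1::nat, 2} \<noteq> {0, 2}" "{0::nat, 1} \<noteq> {0, 2}"
  by (auto simp: doubleton_eq_iff)

lemma contains_berge_K3E:
  assumes "contains_berge K3_V K3_E V H"
  obtains A B C where "A \<in> H" "B \<in> H" "C \<in> H" "A \<noteq> B" "B \<noteq> C" "A \<noteq> C"
    "A \<inter> B \<noteq> {}" "B \<inter> C \<noteq> {}" "A \<inter> C \<noteq> {}"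
proof -
  obtain phi e where inj: "inj_on e K3_E" and into: "e ` K3_E \<subseteq> H"
    and incident: "\<forall>xy\<in>K3_E. phi ` xy \<subseteq> e xy"
    using assms unfolding contains_berge_def by (elim exE conjE)
  have edges: "{0,1} \<in> K3_E" "{1,2} \<in> K3_E" "{0,2} \<in> K3_E"
    by (simp_all add: K3_E_def)
  show ?thesis
  proof (rule that)
    show "e {0,1} \<in> H" "e {1,2} \<in> H" "e {0,2} \<in> H"
      using into edges by blast+
    show "e {0,1} \<noteq> e {1,2}" "e {1,2} \<noteq> e {0,2}" "e {0,1} \<noteq> e {0,2}"
      using K3_edges_distinct inj_on_eq_iff[OF inj] edges by simp_all
    have "phi 1 \<in> e {0,1} \<inter> e {1,2}" "phi 2 \<in> e {1,2} \<inter> e {0,2}" "phi 0 \<in> e {0,1} \<inter> e {0,2}"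
      using incident edges by blast+
    then show "e {0,1} \<inter> e {1,2} \<noteq> {}" "e {1,2} \<inter> e {0,2} \<noteq> {}" "e {0,1} \<inter> e {0,2} \<noteq> {}"
      by blast+
  qed
qed

lemma contains_berge_K3I:
  assumes edges: "A \<in> H" "B \<in> H" "C \<in> H" "A \<noteq> B" "B \<noteq> C" "A \<noteq> C"
    and vertices: "x \<in> V" "y \<in> V" "z \<in> V" "x \<noteq> y" "y \<noteq> z" "x \<noteq> z"
    and incident: "x \<in> A \<inter> C" "y \<in> A \<inter> B" "z \<in> B \<inter> C"
  shows "contains_berge K3_V K3_E V H"
proof -
  define phi :: "nat \<Rightarrow> _" where "phi i = (if i = 0 then x else if i = 1 then y else z)" for i
  define e :: "nat set \<Rightarrow> _"
    where "e s = (if s = {0,1} then A else if s = {1,2} then B else C)" for s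
  have e: "e {0,1} = A" "e {1,2} = B" "e {0,2} = C"
    using K3_edges_distinct unfolding e_def by auto
  have "inj_on phi K3_V" "phi ` K3_V \<subseteq> V"
    using vertices unfolding inj_on_def K3_V_def phi_def by auto
  moreover have "inj_on e K3_E" "e ` K3_E \<subseteq> H"
    using e edges unfolding inj_on_def K3_E_def by auto
  moreover have "\<forall>xy\<in>K3_E. phi ` xy \<subseteq> e xy"
    using e incident unfolding K3_E_def phi_def by auto
  ultimately show ?thesis
    unfolding contains_berge_def by (intro exI[of _ phi] exI[of _ e]) simp
qed

lemma not_contains_berge_K3_if_disjoint_pairs:
  assumes "\<And>A B C. \<lbrakk>A \<in> H; B \<in> H; C \<in> H; A \<noteq> B; B \<noteq> C; A \<noteq> C\<rbrakk> \<Longrightarrow>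
             A \<inter> B = {} \<or> B \<inter> C = {} \<or> A \<inter> C = {}"
  shows "\<not> contains_berge K3_V K3_E V H"
proof
  assume "contains_berge K3_V K3_E V H"
  then obtain A B C where "A \<in> H" "B \<in> H" "C \<in> H" "A \<noteq> B" "B \<noteq> C" "A \<noteq> C"
    and "A \<inter> B \<noteq> {}" "B \<inter> C \<noteq> {}" "A \<inter> C \<noteq> {}"
    by (rule contains_berge_K3E)
  then show False
    using assms[of A B C] by simp
qed

lemma contains_berge_mono:
  assumes "contains_berge VG EG V H" "H \<subseteq> H'"
  shows "contains_berge VG EG V H'"
proof -
  obtain phi e where "inj_on phi VG" "phi ` VG \<subseteq> V" "inj_on e EG" "e ` EG \<subseteq> H"
    "\<forall>xy\<in>EG. phi ` xy \<subseteq> e xy"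
    using assms(1) unfolding contains_berge_def by (elim exE conjE)
  then show ?thesis
    using assms(2) unfolding contains_berge_def by (intro exI[of _ phi] exI[of _ e]) auto
qed

lemma exists_colouring_by_fibres:
  assumes "finite P" and into: "\<And>A. A \<subseteq> {1..n} \<Longrightarrow> \<kappa> A \<in> P"
    and fibres: "\<And>p. \<not> contains_berge VG EG {1..n} {A. A \<subseteq> {1..n} \<and> \<kappa> A = p}"
  shows "\<exists>c. (\<forall>A. A \<subseteq> {1..n} \<longrightarrow> c A < card P) \<and> no_mono_berge VG EG n c"
proof -
  obtain h where h: "bij_betw h P {0..<card P}"
    using ex_bij_betw_finite_nat[OF \<open>finite P\<close>] by blast
  have "\<kappa> A = inv_into P h ((h \<circ> \<kappa>) A)" if "A \<subseteq> {1..n}" for A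
    using bij_betw_inv_into_left[OF h into[OF that]] by simp
  then have sub: "{A. A \<subseteq> {1..n} \<and> (h \<circ> \<kappa>) A = i} \<subseteq> {A. A \<subseteq> {1..n} \<and> \<kappa> A = inv_into P h i}" for i
    by auto
  have "\<not> contains_berge VG EG {1..n} {A. A \<subseteq> {1..n} \<and> (h \<circ> \<kappa>) A = i}" for i
    using fibres[of "inv_into P h i"] contains_berge_mono[OF _ sub[of i]] by blast
  then have "no_mono_berge VG EG n (h \<circ> \<kappa>)"
    unfolding no_mono_berge_def by blast
  moreover have "\<forall>A. A \<subseteq> {1..n} \<longrightarrow> (h \<circ> \<kappa>) A < card P"
    using into bij_betw_apply[OF h] by auto
  ultimately show ?thesis by blast
qed

definition avoiding_rep :: "'a set \<Rightarrow> 'a \<Rightarrow> 'a set \<Rightarrow> 'a set" where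
  "avoiding_rep U a A = (if a \<in> A then U - A else A)"

lemma avoiding_rep_eq_imp_disjoint:
  assumes "A \<subseteq> U" "B \<subseteq> U" "avoiding_rep U a A = avoiding_rep U a B" "A \<noteq> B"
  shows "A \<inter> B = {}"
  using assms unfolding avoiding_rep_def by (auto split: if_splits)

lemma avoiding_rep_subset: "A \<subseteq> U \<Longrightarrow> avoiding_rep U a A \<subseteq> U - {a}"
  unfolding avoiding_rep_def by auto

lemma eq_if_Diff_singleton_eq:
  assumes "X - {b} = Y - {b}" "b \<in> X \<longleftrightarrow> b \<in> Y"
  shows "X = Y"
  using assms by blast

lemma disjoint_pair_if_reps_equal_off_point:
  assumes "A \<subseteq> U" "B \<subseteq> U" "C \<subseteq> U" "A \<noteq> B" "B \<noteq> C" "A \<noteq> C"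
    and "avoiding_rep U a A - {b} = avoiding_rep U a B - {b}"
    and "avoiding_rep U a B - {b} = avoiding_rep U a C - {b}"
  shows "A \<inter> B = {} \<or> B \<inter> C = {} \<or> A \<inter> C = {}"
proof -
  have "avoiding_rep U a A = avoiding_rep U a B \<or> avoiding_rep U a B = avoiding_rep U a C \<or>
        avoiding_rep U a A = avoiding_rep U a C"
    using assms(7,8) eq_if_Diff_singleton_eq by metis
  then show ?thesis
    using avoiding_rep_eq_imp_disjoint assms(1-6) by metis
qed

lemma exists_K3_free_colouring:
  assumes "n \<ge> 2"
  shows "\<exists>c. (\<forall>A. A \<subseteq> {1..n} \<longrightarrow> c A < 2 ^ (n - 2)) \<and> no_mono_berge K3_V K3_E n c"
proof -
  define \<kappa> where "\<kappa> A = avoiding_rep {1..n} 1 A - {2}" for A :: "nat set"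
  have "card ({1..n} - {1,2}) = n - 2"
    using assms by (subst card_Diff_subset) auto
  then have card: "card (Pow ({1..n} - {1,2})) = 2 ^ (n - 2)"
    by (simp add: card_Pow)
  have into: "\<kappa> A \<in> Pow ({1..n} - {1,2})" if "A \<subseteq> {1..n}" for A
    using avoiding_rep_subset[OF that] unfolding \<kappa>_def by auto
  have fibres: "\<not> contains_berge K3_V K3_E {1..n} {A. A \<subseteq> {1..n} \<and> \<kappa> A = p}" for p
  proof (rule not_contains_berge_K3_if_disjoint_pairs)
    fix A B C assume "A \<in> {A. A \<subseteq> {1..n} \<and> \<kappa> A = p}" "B \<in> {A. A \<subseteq> {1..n} \<and> \<kappa> A = p}"
      "C \<in> {A. A \<subseteq> {1..n} \<and> \<kappa> A = p}" "A \<noteq> B" "B \<noteq> C" "A \<noteq> C"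
    then show "A \<inter> B = {} \<or> B \<inter> C = {} \<or> A \<inter> C = {}"
      using disjoint_pair_if_reps_equal_off_point[of A "{1..n}" B C 1 2] unfolding \<kappa>_def by simp
  qed
  show ?thesis
    using exists_colouring_by_fibres[OF _ into fibres] card by simp
qed

lemma card_Int_lower_bound:
  assumes "finite U" "A \<subseteq> U" "B \<subseteq> U"
  shows "card A + card B \<le> card U + card (A \<inter> B)"
proof -
  have "card (A \<union> B) \<le> card U" using assms by (intro card_mono) auto
  moreover have "card A + card B = card (A \<union> B) + card (A \<inter> B)"
    using assms by (intro card_Un_Int) (auto intro: finite_subset)
  ultimately show ?thesis by linarith
qed

lemma K3_free_few_large_edges:
  assumes "finite U" "H \<subseteq> Pow U" "\<not> contains_berge K3_V K3_E U H"
  shows "card {A \<in> H. card U + 3 \<le> 2 * card A} \<le> 2"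
proof (rule ccontr)
  define L where "L = {A \<in> H. card U + 3 \<le> 2 * card A}"
  assume "\<not> card {A \<in> H. card U + 3 \<le> 2 * card A} \<le> 2"
  then have "3 \<le> card L"
    unfolding L_def by simp
  then obtain T where "T \<subseteq> L" "card T = 3"
    by (rule obtain_subset_with_card_n)
  moreover from \<open>card T = 3\<close> obtain A B C where "T = {A, B, C}" "A \<noteq> B" "B \<noteq> C" "A \<noteq> C"
    unfolding card_3_iff by blast
  ultimately have ABC: "A \<in> L" "B \<in> L" "C \<in> L" "A \<noteq> B" "B \<noteq> C" "A \<noteq> C"
    by auto
  have avoid: "\<exists>z \<in> X \<inter> Y. z \<notin> F" if "X \<in> L" "Y \<in> L" "finite F" "card F \<le> 2" for X Y F
  proof (rule ccontr)
    assume "\<not> ?thesis"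
    then have "card (X \<inter> Y) \<le> card F"
      using \<open>finite F\<close> by (intro card_mono) auto
    moreover have "card X + card Y \<le> card U + card (X \<inter> Y)"
      using that(1,2) assms(2) unfolding L_def by (intro card_Int_lower_bound[OF assms(1)]) auto
    ultimately show False
      using that unfolding L_def by simp
  qed
  obtain y where y: "y \<in> A \<inter> B"
    using avoid[OF ABC(1,2), of "{}"] by auto
  obtain x where x: "x \<in> A \<inter> C" "x \<noteq> y"
    using avoid[OF ABC(1,3), of "{y}"] by auto
  obtain z where z: "z \<in> B \<inter> C" "z \<noteq> x" "z \<noteq> y"
    using avoid[OF ABC(2,3), of "{x, y}"] x(2) by auto
  have "A \<in> H" "B \<in> H" "C \<in> H" "x \<in> U" "y \<in> U" "z \<in> U"
    using ABC x y z assms(2) unfolding L_def by auto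
  from contains_berge_K3I[OF this(1-3) ABC(4-6) this(4-6)] x y z
  have "contains_berge K3_V K3_E U H"
    by auto
  with assms(3) show False ..
qed

lemma card_large_subsets_le_colours:
  assumes "\<forall>A. A \<subseteq> {1..n} \<longrightarrow> c A < k" "no_mono_berge K3_V K3_E n c"
  shows "card {A. A \<subseteq> {1..n} \<and> n + 3 \<le> 2 * card A} \<le> 2 * k"
proof -
  define L where "L i = {A \<in> {A. A \<subseteq> {1..n} \<and> c A = i}. card {1..n} + 3 \<le> 2 * card A}" for i
  have "{A. A \<subseteq> {1..n} \<and> n + 3 \<le> 2 * card A} \<subseteq> (\<Union>i<k. L i)"
    using assms(1) unfolding L_def by auto
  then have "card {A. A \<subseteq> {1..n} \<and> n + 3 \<le> 2 * card A} \<le> card (\<Union>i<k. L i)"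
    by (intro card_mono) (auto simp: L_def intro: finite_subset[of _ "Pow {1..n}"])
  also have "\<dots> \<le> (\<Sum>i<k. card (L i))" by (rule card_UN_le) simp
  also have "\<dots> \<le> (\<Sum>i<k. 2)"
    using assms(2) unfolding L_def no_mono_berge_def
    by (intro sum_mono K3_free_few_large_edges) auto
  finally show ?thesis by simp
qed

lemma card_Pow_le_large_subsets:
  assumes "finite U"
  defines "n \<equiv> card U"
  shows "2 ^ n \<le> 2 * card {A. A \<subseteq> U \<and> n + 3 \<le> 2 * card A} + 3 * (n choose (n div 2))"
proof -
  define L where "L = {A. A \<subseteq> U \<and> n + 3 \<le> 2 * card A}"
  define S where "S = {A. A \<subseteq> U \<and> 2 * card A + 3 \<le> n}"
  define K where "K = {n div 2 - 1 .. n div 2 + 1}"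
  define M where "M = (\<Union>k\<in>K. {A. A \<subseteq> U \<and> card A = k})"
  have fin: "finite X" if "X \<subseteq> Pow U" for X
    using assms(1) that by (auto intro: finite_subset)
  have "2 * k + 3 \<le> n \<or> k \<in> K \<or> n + 3 \<le> 2 * k" for k
    unfolding K_def atLeastAtMost_iff by presburger
  then have "Pow U \<subseteq> S \<union> M \<union> L"
    unfolding S_def M_def L_def by blast
  moreover have "S \<union> M \<union> L \<subseteq> Pow U"
    unfolding S_def M_def L_def by blast
  ultimately have "card (Pow U) \<le> card (S \<union> M \<union> L)"
    using fin by (intro card_mono)
  then have "2 ^ n \<le> card (S \<union> M \<union> L)"
    using assms(1) by (simp add: card_Pow n_def)
  also have "\<dots> \<le> card S + card M + card L"
    using card_Un_le[of "S \<union> M" L] card_Un_le[of S M] by linarith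
  also have "card S \<le> card L"
  proof (rule card_inj_on_le)
    show "inj_on (\<lambda>A. U - A) S" unfolding inj_on_def S_def by blast
    show "(\<lambda>A. U - A) ` S \<subseteq> L"
      using assms(1) unfolding S_def L_def n_def by (auto simp: card_Diff_subset finite_subset)
    show "finite L" unfolding L_def by (rule fin) blast
  qed
  also have "card M \<le> (\<Sum>k\<in>K. card {A. A \<subseteq> U \<and> card A = k})"
    unfolding M_def by (rule card_UN_le) (simp add: K_def)
  also have "\<dots> \<le> (\<Sum>k\<in>K. n choose (n div 2))"
    using n_subsets[OF assms(1)] binomial_maximum unfolding n_def by (intro sum_mono) simp
  also have "\<dots> = card K * (n choose (n div 2))"
    by simp
  also have "card K \<le> 3"
    unfolding K_def by simp
  finally show ?thesis unfolding L_def by simp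
qed

lemma central_binomial_Suc:
  "Suc m * (Suc (Suc (2 * m)) choose Suc m) = 2 * (2 * m + 1) * (2 * m choose m)"
proof -
  have sym: "Suc (2 * m) choose Suc m = Suc (2 * m) choose m"
    using binomial_symmetric[of "Suc m" "Suc (2 * m)"] by (simp del: binomial_Suc_Suc)
  have "Suc m * (Suc m * (Suc (Suc (2 * m)) choose Suc m))
          = Suc m * (Suc (Suc (2 * m)) * (Suc (2 * m) choose m))"
    by (simp only: Suc_times_binomial)
  also have "\<dots> = 2 * Suc m * (Suc m * (Suc (2 * m) choose Suc m))"
    by (simp add: sym del: binomial_Suc_Suc)
  also have "\<dots> = Suc m * (2 * (2 * m + 1) * (2 * m choose m))"
    by (simp only: Suc_times_binomial) simp
  finally show ?thesis
    by (simp only: mult_cancel1 nat.distinct simp_thms)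
qed

lemma central_binomial_sq_le: "(2 * m choose m)\<^sup>2 * (2 * m + 1) \<le> 16 ^ m"
proof (induction m)
  case 0
  then show ?case by simp
next
  case (Suc m)
  define a where "a = 2 * m choose m"
  define b where "b = Suc (Suc (2 * m)) choose Suc m"
  have "(Suc m)\<^sup>2 * (b\<^sup>2 * (2 * m + 3)) = (Suc m * b)\<^sup>2 * (2 * m + 3)"
    by algebra
  also have "\<dots> = (2 * (2 * m + 1) * a)\<^sup>2 * (2 * m + 3)"
    by (simp only: a_def b_def central_binomial_Suc)
  also have "\<dots> = (4 * (2 * m + 1) * (2 * m + 3)) * (a\<^sup>2 * (2 * m + 1))"
    by algebra
  also have "\<dots> \<le> (4 * (2 * m + 1) * (2 * m + 3)) * 16 ^ m"
    using Suc.IH unfolding a_def by (rule mult_left_mono) simp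
  also have "\<dots> \<le> (Suc m)\<^sup>2 * 16 ^ Suc m"
    by (simp add: power2_eq_square algebra_simps)
  finally have "b\<^sup>2 * (2 * m + 3) \<le> 16 ^ Suc m"
    by (simp only: nat_mult_le_cancel1[OF zero_less_power[OF zero_less_Suc]])
  moreover have "2 * Suc m = Suc (Suc (2 * m))" "Suc (Suc (2 * m)) + 1 = 2 * m + 3"
    by simp_all
  ultimately show ?case
    unfolding b_def by (simp only:)
qed

lemma middle_binomial_sq_le: "(n choose (n div 2))\<^sup>2 * (n + 1) \<le> 4 ^ n"
proof (cases "even n")
  case True
  then obtain m where "n = 2 * m" by blast
  then show ?thesis using central_binomial_sq_le[of m] by (simp add: power_mult)
next
  case False
  then obtain m where n: "n = Suc (2 * m)" using oddE by fastforce
  have pascal: "Suc n choose Suc m = 2 * (n choose m)"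
    using binomial_symmetric[of "Suc m" n] n by simp
  have "2 * Suc m = Suc n"
    using n by simp
  then have "(2 * (n choose m))\<^sup>2 * (Suc n + 1) \<le> 16 ^ Suc m"
    using central_binomial_sq_le[of "Suc m"] by (simp only: pascal)
  also have "(16::nat) ^ Suc m = 4 * 4 ^ n"
    using n by (simp add: power_mult)
  also have "(2 * (n choose m))\<^sup>2 * (Suc n + 1) = 4 * ((n choose m)\<^sup>2 * (Suc n + 1))"
    by algebra
  finally have "(n choose m)\<^sup>2 * (Suc n + 1) \<le> 4 ^ n"
    by simp
  moreover have "(n choose m)\<^sup>2 * (n + 1) \<le> (n choose m)\<^sup>2 * (Suc n + 1)"
    by simp
  ultimately show ?thesis
    using n by simp
qed

lemma middle_binomial_le: "real (n choose (n div 2)) \<le> 2 ^ n / sqrt (real n + 1)"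
proof -
  have "(real (n choose (n div 2)) * sqrt (real n + 1))\<^sup>2 = real ((n choose (n div 2))\<^sup>2 * (n + 1))"
    by (simp add: power_mult_distrib algebra_simps)
  also have "\<dots> \<le> real ((4::nat) ^ n)"
    using middle_binomial_sq_le by (rule of_nat_mono)
  also have "\<dots> = (2 ^ n)\<^sup>2"
    by (simp add: power2_eq_square power_mult_distrib[symmetric])
  finally have "real (n choose (n div 2)) * sqrt (real n + 1) \<le> 2 ^ n"
    by (rule power2_le_imp_le) simp
  then show ?thesis by (simp add: field_simps)
qed

lemma LIMSEQ_three_div_sqrt: "(\<lambda>n. 3 / sqrt (real n + 1)) \<longlonglongrightarrow> 0"
proof -
  have "filterlim (\<lambda>n. 1 + real n) at_top sequentially"
    by (rule filterlim_tendsto_add_at_top[OF tendsto_const filterlim_real_sequentially])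
  then have "filterlim (\<lambda>n. real n + 1) at_top sequentially"
    by (simp add: add.commute)
  then have "filterlim (\<lambda>n. sqrt (real n + 1)) at_top sequentially"
    by (rule filterlim_compose[OF sqrt_at_top])
  then show ?thesis
    by (intro tendsto_divide_0[OF tendsto_const] filterlim_at_top_imp_at_infinity)
qed

lemma f_berge_K3_le:
  assumes "n \<ge> 2"
  shows "f_berge K3_V K3_E n \<le> 2 ^ (n - 2)"
  unfolding f_berge_def by (rule Least_le) (rule exists_K3_free_colouring[OF assms])

lemma two_pow_le_f_berge_K3:
  assumes "n \<ge> 2"
  shows "2 ^ n \<le> 4 * f_berge K3_V K3_E n + 3 * (n choose (n div 2))"
proof -
  have "\<exists>c. (\<forall>A. A \<subseteq> {1..n} \<longrightarrow> c A < f_berge K3_V K3_E n) \<and> no_mono_berge K3_V K3_E n c"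
    unfolding f_berge_def by (rule LeastI_ex) (use exists_K3_free_colouring[OF assms] in blast)
  then obtain c where "\<forall>A. A \<subseteq> {1..n} \<longrightarrow> c A < f_berge K3_V K3_E n" "no_mono_berge K3_V K3_E n c"
    by blast
  then have "card {A. A \<subseteq> {1..n} \<and> n + 3 \<le> 2 * card A} \<le> 2 * f_berge K3_V K3_E n"
    by (rule card_large_subsets_le_colours)
  then show ?thesis
    using card_Pow_le_large_subsets[of "{1..n}"] by simp
qed

lemma f_berge_K3_ge:
  assumes "n \<ge> 2"
  shows "2 ^ (n - 2) * (1 - 3 / sqrt (real n + 1)) \<le> real (f_berge K3_V K3_E n)"
proof -
  obtain k where "n = k + 2"
    using assms by (metis add.commute le_Suc_ex)
  then have "(2::real) ^ n = 4 * 2 ^ (n - 2)"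
    by simp
  then have "2 ^ (n - 2) * (1 - 3 / sqrt (real n + 1)) = (2 ^ n - 3 * (2 ^ n / sqrt (real n + 1))) / 4"
    by (simp add: field_simps)
  also have "\<dots> \<le> (2 ^ n - 3 * real (n choose (n div 2))) / 4"
    using middle_binomial_le[of n] by simp
  also have "\<dots> \<le> real (f_berge K3_V K3_E n)"
    using of_nat_mono[OF two_pow_le_f_berge_K3[OF assms], where 'a = real] by simp
  finally show ?thesis .
qed

theorem theorem1:
  shows "(\<forall>n\<ge>3. f_berge K3_V K3_E n \<le> 2 ^ (n - 2)) \<and>
         (\<exists>g :: nat \<Rightarrow> real. g \<longlonglongrightarrow> 0 \<and>
            (\<forall>n\<ge>3. 2 ^ (n - 2) * (1 - g n) \<le> real (f_berge K3_V K3_E n)))"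
proof (intro conjI allI impI exI[of _ "\<lambda>n. 3 / sqrt (real n + 1)"])
  show "(\<lambda>n. 3 / sqrt (real n + 1)) \<longlonglongrightarrow> 0"
    by (rule LIMSEQ_three_div_sqrt)
next
  fix n :: nat
  assume "n \<ge> 3"
  then show "f_berge K3_V K3_E n \<le> 2 ^ (n - 2)"
    and "2 ^ (n - 2) * (1 - 3 / sqrt (real n + 1)) \<le> real (f_berge K3_V K3_E n)"
    using f_berge_K3_le f_berge_K3_ge by simp_all
qed

end
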